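(* Consider the linear structural equation model described in the context. Suppose that the plurality rule for the direction $X\to Y$ holds, i.e. $$|\mathcal{V}_{X\to Y}|>\max_{c\in\mathbb{R}}\Big|\Big\{j\in \mathcal{I}_{X\to Y}:\tfrac{\pi_{Y,j}}{\gamma_{X,j}}=c\Big\}\Big|,$$ and that $\mathrm{Cov}(Y_iR_{Y,i},Z_i)\neq 0$. Then $\beta_{X\to Y}$ and $\beta_{Y\to X}$ are identifiable, i.e. uniquely determined by the joint distribution of the observed variables $(X_i,Y_i,Z_i)$.
   Context: Observations $(X_i,Y_i,Z_i,U_i)$, $i=1,\dots,n$, are i.i.d.; $X_i,Y_i\in\mathbb{R}$ are observed primary variables with finite variance, $Z_i\in\mathbb{R}^p$ is an observed vector of candidate instruments, $U_i$ is unobserved. Assume $E(X_i)=E(Y_i)=0$, $E(Z_i)=0$, and $\Sigma=E(Z_iZ_i^{T})$ is invertible. The data satisfy $$Y_i=\beta_{X\to Y}X_i+\pi_Y^{T}Z_i+\xi_Y(U_i)+\zeta_i,\qquad X_i=\beta_{Y\to X}Y_i+\pi_X^{T}Z_i+\xi_X(U_i)+\eta_i,$$ where $\pi_X,\pi_Y\in\mathbb{R}^p$, $\xi_Y,\xi_X$ are arbitrary functions with $E\xi_Y(U_i)=E\xi_X(U_i)=0$, $Z_i$ is independent of $U_i$, and $E(\zeta_i\mid\eta_i,Z_i,U_i)=E(\eta_i\mid\zeta_i,Z_i,U_i)=0$. The matrix $B=\begin{pmatrix}0&\beta_{X\to Y}\\ \beta_{Y\to X}&0\end{pmatrix}$ has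 spectral norm strictly less than one (so $\beta_{X\to Y}\beta_{Y\to X}\neq1$), and $(Y_i,X_i)^T=(I-B)^{-1}\{(\pi_Y^TZ_i,\pi_X^TZ_i)^T+R_i\}$ with disturbances $R_i=(R_{Y,i},R_{X,i})^T$, $R_{Y,i}=\xi_Y(U_i)+\zeta_i$, $R_{X,i}=\xi_X(U_i)+\eta_i$. Then $E(Y_i\mid Z_i)=\gamma_Y^TZ_i$, $E(X_i\mid Z_i)=\gamma_X^TZ_i$ with $\gamma_Y=(\pi_Y+\beta_{X\to Y}\pi_X)/(1-\beta_{X\to Y}\beta_{Y\to X})$ and $\gamma_X=(\pi_X+\beta_{Y\to X}\pi_Y)/(1-\beta_{X\to Y}\beta_{Y\to X})$. Define $\mathcal{V}_{X\to Y}=\{j:\pi_{X,j}\neq0,\pi_{Y,j}=0\}$ and $\mathcal{I}_{X\to Y}=\{j:\gamma_{X,j}\neq 0,\pi_{Y,j}\neq0\}$. The maximum over an empty collection of sets is taken as $0$. *)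

theory Defs
  imports "HOL-Analysis.Analysis" "HOL-Probability.Probability"
begin

definition cov :: "'a measure \<Rightarrow> ('a \<Rightarrow> real) \<Rightarrow> ('a \<Rightarrow> real) \<Rightarrow> real" where
  "cov M f g = (\<integral>x. f x * g x \<partial>M) - (\<integral>x. f x \<partial>M) * (\<integral>x. g x \<partial>M)"

definition cov_vec :: "'a measure \<Rightarrow> ('a \<Rightarrow> real) \<Rightarrow> ('a \<Rightarrow> real^'p) \<Rightarrow> real^'p" where
  "cov_vec M w Z = (\<chi> j. cov M w (\<lambda>x. Z x $ j))"

definition second_moment :: "'a measure \<Rightarrow> ('a \<Rightarrow> real^'p) \<Rightarrow> real^'p^'p" where
  "second_moment M Z = (\<chi> j k. \<integral>x. Z x $ j * Z x $ k \<partial>M)"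

definition Bmat :: "real \<Rightarrow> real \<Rightarrow> real^2^2" where
  "Bmat bXY bYX = vector [vector [0, bXY], vector [bYX, 0]]"

definition spec_norm :: "real^'n^'m \<Rightarrow> real" where
  "spec_norm A = onorm (\<lambda>v. A *v v)"

definition gammaY :: "real \<Rightarrow> real \<Rightarrow> real^'p \<Rightarrow> real^'p \<Rightarrow> real^'p" where
  "gammaY bXY bYX piY piX = (1 / (1 - bXY * bYX)) *\<^sub>R (piY + bXY *\<^sub>R piX)"

definition gammaX :: "real \<Rightarrow> real \<Rightarrow> real^'p \<Rightarrow> real^'p \<Rightarrow> real^'p" where
  "gammaX bXY bYX piY piX = (1 / (1 - bXY * bYX)) *\<^sub>R (piX + bYX *\<^sub>R piY)"

definition validXY :: "real^'p \<Rightarrow> real^'p \<Rightarrow> 'p set" where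
  "validXY piY piX = {j. piX $ j \<noteq> 0 \<and> piY $ j = 0}"

definition invalidXY :: "real \<Rightarrow> real \<Rightarrow> real^'p \<Rightarrow> real^'p \<Rightarrow> 'p set" where
  "invalidXY bXY bYX piY piX = {j. gammaX bXY bYX piY piX $ j \<noteq> 0 \<and> piY $ j \<noteq> 0}"

text \<open>Plurality rule for X->Y:
  |V| > max_c |{j in I. piY_j / gammaX_j = c}|.  (The maximum is over the finite,
  nonempty set of attained values; it equals 0 when I is empty.)\<close>
definition plurality_XY :: "real \<Rightarrow> real \<Rightarrow> real^'p \<Rightarrow> real^'p \<Rightarrow> bool" where
  "plurality_XY bXY bYX piY piX \<longleftrightarrow>
     card (validXY piY piX) >
     Max ((\<lambda>c. card {j \<in> invalidXY bXY bYX piY piX.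
                        piY $ j / gammaX bXY bYX piY piX $ j = c}) ` UNIV)"

text \<open>The linear structural equation model of the context, for one data-generating
  mechanism: probability space M, observed X, Y, Z, unobserved U (valued in the
  measurable space MU), confounding functions xiY, xiX, errors zeta, eta and
  parameters bXY = beta_{X->Y}, bYX = beta_{Y->X}, piY, piX.\<close>
definition lin_sem ::
  "'a measure \<Rightarrow> ('a \<Rightarrow> real) \<Rightarrow> ('a \<Rightarrow> real) \<Rightarrow> ('a \<Rightarrow> real^'p) \<Rightarrow>
   ('a \<Rightarrow> 'u) \<Rightarrow> 'u measure \<Rightarrow> ('u \<Rightarrow> real) \<Rightarrow> ('u \<Rightarrow> real) \<Rightarrow>
   ('a \<Rightarrow> real) \<Rightarrow> ('a \<Rightarrow> real) \<Rightarrow> real \<Rightarrow> real \<Rightarrow> real^'p \<Rightarrow> real^'p \<Rightarrow> bool" where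
  "lin_sem M X Y Z U MU xiY xiX zeta eta bXY bYX piY piX \<longleftrightarrow>
     prob_space M \<and>
     X \<in> borel_measurable M \<and> Y \<in> borel_measurable M \<and> Z \<in> borel_measurable M \<and>
     U \<in> measurable M MU \<and> zeta \<in> borel_measurable M \<and> eta \<in> borel_measurable M \<and>
     xiY \<in> borel_measurable MU \<and> xiX \<in> borel_measurable MU \<and>
     \<comment> \<open>finite variance of X, Y and mean zero\<close>
     integrable M (\<lambda>x. (X x)\<^sup>2) \<and> integrable M (\<lambda>x. (Y x)\<^sup>2) \<and>
     (\<integral>x. X x \<partial>M) = 0 \<and> (\<integral>x. Y x \<partial>M) = 0 \<and>
     \<comment> \<open>E Z = 0 and Sigma = E(Z Z^T) exists and is invertible\<close>
     (\<forall>j. integrable M (\<lambda>x. (Z x $ j)\<^sup>2) \<and> (\<integral>x. Z x $ j \<partial>M) = 0) \<and>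
     invertible (second_moment M Z) \<and>
     \<comment> \<open>structural equations\<close>
     (\<forall>x\<in>space M. Y x = bXY * X x + piY \<bullet> Z x + xiY (U x) + zeta x) \<and>
     (\<forall>x\<in>space M. X x = bYX * Y x + piX \<bullet> Z x + xiX (U x) + eta x) \<and>
     \<comment> \<open>E xi(U) = 0\<close>
     integrable M (\<lambda>x. xiY (U x)) \<and> (\<integral>x. xiY (U x) \<partial>M) = 0 \<and>
     integrable M (\<lambda>x. xiX (U x)) \<and> (\<integral>x. xiX (U x) \<partial>M) = 0 \<and>
     \<comment> \<open>Z independent of U\<close>
     prob_space.indep_set M {Z -` A \<inter> space M | A. A \<in> sets borel}
                          {U -` A \<inter> space M | A. A \<in> sets MU} \<and>
     \<comment> \<open>E(zeta | eta, Z, U) = 0 and E(eta | zeta, Z, U) = 0\<close>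
     integrable M zeta \<and> integrable M eta \<and>
     (AE x in M. real_cond_exp M
         (vimage_algebra (space M) (\<lambda>x. (eta x, Z x, U x)) (borel \<Otimes>\<^sub>M (borel \<Otimes>\<^sub>M MU)))
         zeta x = 0) \<and>
     (AE x in M. real_cond_exp M
         (vimage_algebra (space M) (\<lambda>x. (zeta x, Z x, U x)) (borel \<Otimes>\<^sub>M (borel \<Otimes>\<^sub>M MU)))
         eta x = 0) \<and>
     \<comment> \<open>spectral norm of B strictly less than one\<close>
     spec_norm (Bmat bXY bYX) < 1"

definition RY :: "('a \<Rightarrow> 'u) \<Rightarrow> ('u \<Rightarrow> real) \<Rightarrow> ('a \<Rightarrow> real) \<Rightarrow> 'a \<Rightarrow> real" where
  "RY U xiY zeta = (\<lambda>x. xiY (U x) + zeta x)"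

end

theory Submission
  imports Defs
begin

text \<open>Projecting both structural equations on \<open>Z\<close> (which is independent of \<open>U\<close>,
  while the errors are conditionally centred) gives \<open>\<Sigma> \<gamma>\<^sub>X = E(Z X)\<close> and
  \<open>\<Sigma> \<gamma>\<^sub>Y = E(Z Y)\<close>, so the reduced forms are determined by the law.
  As \<open>\<gamma>\<^sub>Y = \<beta>\<^sub>X\<^sub>\<rightarrow>\<^sub>Y \<gamma>\<^sub>X + \<pi>\<^sub>Y\<close>, the ratio \<open>\<gamma>\<^sub>Y\<^sub>,\<^sub>j / \<gamma>\<^sub>X\<^sub>,\<^sub>j\<close> equals
  \<open>\<beta>\<^sub>X\<^sub>\<rightarrow>\<^sub>Y\<close> exactly on the valid instruments and \<open>\<beta>\<^sub>X\<^sub>\<rightarrow>\<^sub>Y + \<pi>\<^sub>Y\<^sub>,\<^sub>j / \<gamma>\<^sub>X\<^sub>,\<^sub>j\<close>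
  on the invalid ones, so under the plurality rule \<open>\<beta>\<^sub>X\<^sub>\<rightarrow>\<^sub>Y\<close> is the unique most
  frequent ratio; this also identifies \<open>\<pi>\<^sub>Y\<close>.
  For \<open>\<beta>\<^sub>Y\<^sub>\<rightarrow>\<^sub>X\<close> one uses that \<open>R\<^sub>X R\<^sub>Y\<close> is mean independent of \<open>Z\<close>: a second
  value consistent with the law would make \<open>Y R\<^sub>Y\<close> mean independent of \<open>Z\<close> as well,
  contradicting \<open>Cov(Y R\<^sub>Y, Z) \<noteq> 0\<close>.\<close>

lemma spec_norm_Bmat_swap_le: "spec_norm (Bmat b a) \<le> spec_norm (Bmat a b)"
  unfolding spec_norm_def
proof (rule onorm_bound)
  have lin: "bounded_linear (\<lambda>v. Bmat a b *v v)"
    by (rule matrix_vector_mul_bounded_linear)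
  then show "0 \<le> onorm (\<lambda>v. Bmat a b *v v)"
    by (rule onorm_pos_le)
  fix v :: "real^2"
  define w :: "real^2" where "w = vector [v $ 2, v $ 1]"
  have "norm (Bmat b a *v v) = norm (Bmat a b *v w)"
    by (simp add: w_def Bmat_def norm_vec_def L2_set_def UNIV_2 matrix_vector_mult_def add.commute)
  also have "\<dots> \<le> onorm (\<lambda>v. Bmat a b *v v) * norm w"
    using onorm[OF lin] by simp
  also have "norm w = norm v"
    by (simp add: w_def norm_vec_def L2_set_def UNIV_2 add.commute)
  finally show "norm (Bmat b a *v v) \<le> onorm (\<lambda>v. Bmat a b *v v) * norm v" .
qed

lemma spec_norm_Bmat_swap: "spec_norm (Bmat b a) = spec_norm (Bmat a b)"
  by (intro antisym spec_norm_Bmat_swap_le)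

lemma prod_ne_1_if_spec_norm_Bmat_lt_1:
  assumes "spec_norm (Bmat a b) < 1"
  shows "a * b \<noteq> 1"
proof -
  have entry: "\<bar>Bmat a b $ i $ j\<bar> < 1" for i j
    using matrix_component_le_onorm[of "Bmat a b" i j] assms unfolding spec_norm_def by simp
  have "\<bar>a\<bar> < 1" "\<bar>b\<bar> < 1"
    using entry[of 1 2] entry[of 2 1] by (simp_all add: Bmat_def)
  then have "\<bar>a\<bar> * \<bar>b\<bar> < 1"
    by (metis abs_ge_zero less_le_not_le mult_left_le order.strict_trans1)
  then have "\<bar>a * b\<bar> < 1"
    by (simp add: abs_mult)
  then show ?thesis by auto
qed

lemma lin_sem_swap:
  "lin_sem M X Y Z U MU xiY xiX zeta eta bXY bYX piY piX \<Longrightarrow>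
   lin_sem M Y X Z U MU xiX xiY eta zeta bYX bXY piX piY"
  unfolding lin_sem_def spec_norm_Bmat_swap by blast

definition clip :: "nat \<Rightarrow> real \<Rightarrow> real" where
  "clip n t = max (- real n) (min (real n) t)"

lemma abs_clip: "\<bar>clip n t\<bar> = min (real n) \<bar>t\<bar>"
  unfolding clip_def by auto

lemma abs_clip_le: "\<bar>clip n t\<bar> \<le> real n" "\<bar>clip n t\<bar> \<le> \<bar>t\<bar>"
  unfolding abs_clip by auto

lemma clip_square_le: "(clip n t)\<^sup>2 \<le> clip n t * t"
proof (cases "t \<ge> 0")
  case True
  then have "0 \<le> clip n t" "clip n t \<le> t" by (auto simp: clip_def)
  then show ?thesis by (simp add: power2_eq_square mult_left_mono)
next
  case False
  then have "clip n t \<le> 0" "t \<le> clip n t" by (auto simp: clip_def)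
  then show ?thesis by (simp add: power2_eq_square mult_left_mono_neg)
qed

lemma clip_square_mono: "m \<le> n \<Longrightarrow> (clip m t)\<^sup>2 \<le> (clip n t)\<^sup>2"
  by (simp add: abs_le_square_iff[symmetric] abs_clip)

lemma LIMSEQ_clip: "(\<lambda>n. clip n t) \<longlonglongrightarrow> t"
proof (rule tendsto_eventually)
  obtain N where "\<bar>t\<bar> \<le> real N" using real_arch_simple by blast
  then show "\<forall>\<^sub>F n in sequentially. clip n t = t"
    unfolding eventually_sequentially clip_def by (intro exI[of _ N]) auto
qed

lemma borel_measurable_clip[measurable]:
  "f \<in> borel_measurable M \<Longrightarrow> (\<lambda>x. clip n (f x)) \<in> borel_measurable M"
  unfolding clip_def by (intro borel_measurable_max borel_measurable_min) auto

lemma borel_measurable_vec_nth[measurable]: "(\<lambda>x::real^'n. x $ j) \<in> borel_measurable borel"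
  by (intro borel_measurable_continuous_onI linear_continuous_on bounded_linear_vec_nth)

lemma integrable_mult_if_square_integrable:
  fixes f g :: "'a \<Rightarrow> real"
  assumes [measurable]: "f \<in> borel_measurable M" "g \<in> borel_measurable M"
    and "integrable M (\<lambda>x. (f x)\<^sup>2)" "integrable M (\<lambda>x. (g x)\<^sup>2)"
  shows "integrable M (\<lambda>x. f x * g x)"
proof (rule Bochner_Integration.integrable_bound)
  show "integrable M (\<lambda>x. (f x)\<^sup>2 + (g x)\<^sup>2)"
    using assms by auto
  show "AE x in M. norm (f x * g x) \<le> norm ((f x)\<^sup>2 + (g x)\<^sup>2)"
  proof (intro AE_I2)
    fix x
    have "\<bar>f x * g x\<bar> \<le> 2 * \<bar>f x * g x\<bar>"
      by simp
    also have "\<dots> \<le> (f x)\<^sup>2 + (g x)\<^sup>2"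
      using sum_squares_bound[of "\<bar>f x\<bar>" "\<bar>g x\<bar>"] by (simp add: abs_mult mult.assoc)
    finally show "norm (f x * g x) \<le> norm ((f x)\<^sup>2 + (g x)\<^sup>2)"
      by simp
  qed
qed measurable

lemma integrable_bounded_mult:
  fixes f g :: "'a \<Rightarrow> real"
  assumes [measurable]: "f \<in> borel_measurable M" "g \<in> borel_measurable M"
    and "integrable M g" and bound: "\<And>x. \<bar>f x\<bar> \<le> B"
  shows "integrable M (\<lambda>x. f x * g x)"
proof (rule Bochner_Integration.integrable_bound)
  show "integrable M (\<lambda>x. B * g x)"
    using assms by auto
  have "0 \<le> B"
    using bound[of undefined] by linarith
  then show "AE x in M. norm (f x * g x) \<le> norm (B * g x)"
    using bound by (intro AE_I2) (simp add: abs_mult mult_right_mono)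
qed measurable

lemma square_integrable_add:
  fixes f g :: "'a \<Rightarrow> real"
  assumes [measurable]: "f \<in> borel_measurable M" "g \<in> borel_measurable M"
    and "integrable M (\<lambda>x. (f x)\<^sup>2)" "integrable M (\<lambda>x. (g x)\<^sup>2)"
  shows "integrable M (\<lambda>x. (f x + g x)\<^sup>2)"
  using integrable_mult_if_square_integrable[OF assms] assms(3,4)
  by (auto simp: power2_sum mult.assoc)

lemma square_integrable_diff:
  fixes f g :: "'a \<Rightarrow> real"
  assumes [measurable]: "f \<in> borel_measurable M" "g \<in> borel_measurable M"
    and "integrable M (\<lambda>x. (f x)\<^sup>2)" "integrable M (\<lambda>x. (g x)\<^sup>2)"
  shows "integrable M (\<lambda>x. (f x - g x)\<^sup>2)"
  using integrable_mult_if_square_integrable[OF assms] assms(3,4)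
  by (auto simp: power2_diff mult.assoc)

lemma square_integrable_sum:
  fixes f :: "'i \<Rightarrow> 'a \<Rightarrow> real"
  assumes "finite S" "\<And>i. i \<in> S \<Longrightarrow> f i \<in> borel_measurable M"
    and "\<And>i. i \<in> S \<Longrightarrow> integrable M (\<lambda>x. (f i x)\<^sup>2)"
  shows "integrable M (\<lambda>x. (\<Sum>i\<in>S. f i x)\<^sup>2)"
  using assms
proof (induction S rule: finite_induct)
  case (insert i S)
  then show ?case
    by (simp add: square_integrable_add borel_measurable_sum)
qed simp

text \<open>If each truncation of \<open>xi\<close> is orthogonal to \<open>e\<close>, then
  \<open>E (clip n xi)\<^sup>2 \<le> E (clip n xi * (xi + e))\<close>, which is at most
  \<open>(E (clip n xi)\<^sup>2 + E (xi + e)\<^sup>2) / 2\<close>; monotone convergence does the rest.\<close>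
lemma (in finite_measure) square_integrable_if_orthogonal_to_clips:
  fixes xi e :: "'a \<Rightarrow> real"
  assumes [measurable]: "xi \<in> borel_measurable M" "e \<in> borel_measurable M"
    and int_xi: "integrable M xi" and int_e: "integrable M e"
    and int_sum: "integrable M (\<lambda>x. (xi x + e x)\<^sup>2)"
    and orth: "\<And>n. (\<integral>x. clip n (xi x) * e x \<partial>M) = 0"
  shows "integrable M (\<lambda>x. (xi x)\<^sup>2)"
proof -
  define c where "c n x = clip n (xi x)" for n x
  have [measurable]: "c n \<in> borel_measurable M" for n
    unfolding c_def by measurable
  have int_c2: "integrable M (\<lambda>x. (c n x)\<^sup>2)" for n
  proof (rule integrable_const_bound[where B = "real n ^ 2"])
    show "AE x in M. norm ((c n x)\<^sup>2) \<le> real n ^ 2"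
      using abs_clip_le(1) by (intro AE_I2) (simp add: c_def abs_le_square_iff[symmetric])
  qed measurable
  have int_c_xi: "integrable M (\<lambda>x. c n x * xi x)" for n
    by (rule integrable_bounded_mult[OF _ _ int_xi, where B = "real n"]) (auto simp: c_def abs_clip_le)
  have int_c_e: "integrable M (\<lambda>x. c n x * e x)" for n
    by (rule integrable_bounded_mult[OF _ _ int_e, where B = "real n"]) (auto simp: c_def abs_clip_le)
  have bound: "(\<integral>x. (c n x)\<^sup>2 \<partial>M) \<le> (\<integral>x. (xi x + e x)\<^sup>2 \<partial>M)" for n
  proof -
    have "(\<integral>x. (c n x)\<^sup>2 \<partial>M) \<le> (\<integral>x. c n x * xi x \<partial>M)"
      by (rule integral_mono[OF int_c2 int_c_xi]) (simp add: c_def clip_square_le)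
    also have "\<dots> = (\<integral>x. c n x * xi x \<partial>M) + (\<integral>x. c n x * e x \<partial>M)"
      using orth[of n] by (simp add: c_def)
    also have "\<dots> = (\<integral>x. c n x * (xi x + e x) \<partial>M)"
      using int_c_xi int_c_e by (simp add: distrib_left)
    also have "\<dots> \<le> (\<integral>x. ((c n x)\<^sup>2 + (xi x + e x)\<^sup>2) / 2 \<partial>M)"
    proof (rule integral_mono)
      show "integrable M (\<lambda>x. c n x * (xi x + e x))"
        using int_c_xi int_c_e by (simp add: distrib_left)
      show "integrable M (\<lambda>x. ((c n x)\<^sup>2 + (xi x + e x)\<^sup>2) / 2)"
        using int_c2 int_sum by auto
      show "c n x * (xi x + e x) \<le> ((c n x)\<^sup>2 + (xi x + e x)\<^sup>2) / 2" for x
        using sum_squares_bound[of "c n x" "xi x + e x"] by simp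
    qed
    also have "\<dots> = ((\<integral>x. (c n x)\<^sup>2 \<partial>M) + (\<integral>x. (xi x + e x)\<^sup>2 \<partial>M)) / 2"
      using int_c2 int_sum by simp
    finally show ?thesis by simp
  qed
  have "incseq (\<lambda>n. \<integral>x. (c n x)\<^sup>2 \<partial>M)"
    by (intro incseq_SucI integral_mono[OF int_c2 int_c2]) (simp add: c_def clip_square_mono)
  then obtain L where L: "(\<lambda>n. \<integral>x. (c n x)\<^sup>2 \<partial>M) \<longlonglongrightarrow> L"
    using incseq_convergent bound by blast
  show ?thesis
  proof (rule integral_monotone_convergence_nonneg(1)[OF int_c2 _ _ _ L])
    show "AE x in M. mono (\<lambda>n. (c n x)\<^sup>2)"
      by (intro AE_I2) (simp add: mono_def c_def clip_square_mono)
    show "AE x in M. (\<lambda>n. (c n x)\<^sup>2) \<longlonglongrightarrow> (xi x)\<^sup>2"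
      unfolding c_def by (intro AE_I2 tendsto_power LIMSEQ_clip)
  qed auto
qed

lemma (in finite_measure) integral_mult_eq_0_if_real_cond_exp_eq_0:
  fixes e h :: "'a \<Rightarrow> real"
  assumes [measurable]: "V \<in> measurable M N" "phi \<in> borel_measurable N" "e \<in> borel_measurable M"
    and cond_exp: "AE x in M. real_cond_exp M (vimage_algebra (space M) V N) e x = 0"
    and h: "\<And>x. x \<in> space M \<Longrightarrow> h x = phi (V x)"
    and int: "integrable M (\<lambda>x. h x * e x)"
  shows "(\<integral>x. h x * e x \<partial>M) = 0"
proof -
  let ?F = "vimage_algebra (space M) V N"
  have V_space: "V \<in> space M \<rightarrow> space N"
    using measurable_space[OF assms(1)] by auto
  interpret F: finite_measure_subalgebra M ?F
    using sets_vimage_algebra2[OF V_space] measurable_sets[OF assms(1)]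
    by unfold_locales (auto simp: subalgebra_def)
  have [measurable]: "(\<lambda>x. phi (V x)) \<in> borel_measurable ?F"
    by (rule measurable_compose[OF measurable_vimage_algebra1[OF V_space] assms(2)])
  have int': "integrable M (\<lambda>x. phi (V x) * e x)"
    using int by (rule Bochner_Integration.integrable_cong[THEN iffD1, rotated 2]) (simp_all add: h)
  have "(\<integral>x. h x * e x \<partial>M) = (\<integral>x. phi (V x) * e x \<partial>M)"
    by (rule Bochner_Integration.integral_cong) (simp_all add: h)
  also have "\<dots> = (\<integral>x. phi (V x) * real_cond_exp M ?F e x \<partial>M)"
    using F.real_cond_exp_intg(2)[OF int'] by simp
  also have "\<dots> = 0"
    using cond_exp by (intro integral_eq_zero_AE) (auto elim: AE_mp)
  finally show ?thesis .
qed

text \<open>\<open>E(W | Z) = E W\<close>, phrased through bounded test functions of \<open>Z\<close>.\<close>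
definition mean_independent :: "'a measure \<Rightarrow> ('a \<Rightarrow> 'b::topological_space) \<Rightarrow> ('a \<Rightarrow> real) \<Rightarrow> bool"
  where "mean_independent M Z W \<longleftrightarrow> integrable M W \<and>
    (\<forall>f B. f \<in> borel_measurable borel \<longrightarrow> (\<forall>z. \<bar>f z\<bar> \<le> B) \<longrightarrow>
      (\<integral>x. f (Z x) \<partial>M) = 0 \<longrightarrow> (\<integral>x. f (Z x) * W x \<partial>M) = 0)"

lemma mean_independentI:
  assumes "integrable M W"
    and "\<And>f B. f \<in> borel_measurable borel \<Longrightarrow> (\<And>z. \<bar>f z\<bar> \<le> B) \<Longrightarrow>
      (\<integral>x. f (Z x) \<partial>M) = 0 \<Longrightarrow> (\<integral>x. f (Z x) * W x \<partial>M) = 0"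
  shows "mean_independent M Z W"
  using assms unfolding mean_independent_def by blast

lemma mean_independentD:
  assumes "mean_independent M Z W" "f \<in> borel_measurable borel" "\<And>z. \<bar>f z\<bar> \<le> B"
    "(\<integral>x. f (Z x) \<partial>M) = 0"
  shows "(\<integral>x. f (Z x) * W x \<partial>M) = 0"
  using assms unfolding mean_independent_def by blast

lemma mean_independent_integrable: "mean_independent M Z W \<Longrightarrow> integrable M W"
  unfolding mean_independent_def by blast

lemma mean_independent_cong:
  assumes "mean_independent M Z W" "\<And>x. x \<in> space M \<Longrightarrow> W' x = W x"
  shows "mean_independent M Z W'"
proof (rule mean_independentI)
  show "integrable M W'"
    using assms mean_independent_integrable Bochner_Integration.integrable_cong by metis
  show "(\<integral>x. f (Z x) * W' x \<partial>M) = 0"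
    if "f \<in> borel_measurable borel" "\<And>z. \<bar>f z\<bar> \<le> B" "(\<integral>x. f (Z x) \<partial>M) = 0" for f B
    using mean_independentD[OF assms(1) that] assms(2)
    by (metis (mono_tags, lifting) Bochner_Integration.integral_cong)
qed

lemma mean_independent_add:
  assumes [measurable]: "Z \<in> borel_measurable M"
    and W: "mean_independent M Z W" and W': "mean_independent M Z W'"
  shows "mean_independent M Z (\<lambda>x. W x + W' x)"
proof (rule mean_independentI)
  have [measurable]: "W \<in> borel_measurable M" "W' \<in> borel_measurable M"
    using mean_independent_integrable[OF W] mean_independent_integrable[OF W'] by auto
  show "integrable M (\<lambda>x. W x + W' x)"
    using W W' by (simp add: mean_independent_integrable)
  fix f :: "_ \<Rightarrow> real" and B :: real
  assume f[measurable]: "f \<in> borel_measurable borel" and bound: "\<And>z. \<bar>f z\<bar> \<le> B"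
    and f0: "(\<integral>x. f (Z x) \<partial>M) = 0"
  have "integrable M (\<lambda>x. f (Z x) * W x)" "integrable M (\<lambda>x. f (Z x) * W' x)"
    using W W' bound by (auto intro!: integrable_bounded_mult simp: mean_independent_integrable)
  then show "(\<integral>x. f (Z x) * (W x + W' x) \<partial>M) = 0"
    using mean_independentD[OF W f bound f0] mean_independentD[OF W' f bound f0]
    by (simp add: distrib_left)
qed

lemma mean_independent_cmult:
  "mean_independent M Z W \<Longrightarrow> mean_independent M Z (\<lambda>x. c * W x)"
  unfolding mean_independent_def by (simp add: mult.left_commute[of _ c])

lemma mean_independent_diff:
  assumes "Z \<in> borel_measurable M" "mean_independent M Z W" "mean_independent M Z W'"
  shows "mean_independent M Z (\<lambda>x. W x - W' x)"
  using mean_independent_add[OF assms(1,2) mean_independent_cmult[OF assms(3), of "-1"]] by simp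

text \<open>Truncating \<open>h\<close> gives bounded test functions \<open>clip n \<circ> h - c\<^sub>n\<close>; the means
  \<open>c\<^sub>n\<close> tend to \<open>E h(Z) = 0\<close> by dominated convergence.\<close>
lemma (in prob_space) integral_mult_eq_0_if_mean_independent:
  assumes [measurable]: "Z \<in> borel_measurable M" "h \<in> borel_measurable borel"
    and mi: "mean_independent M Z W"
    and int_h: "integrable M (\<lambda>x. h (Z x))" and mean_h: "(\<integral>x. h (Z x) \<partial>M) = 0"
  shows "(\<integral>x. h (Z x) * W x \<partial>M) = 0"
proof (cases "integrable M (\<lambda>x. h (Z x) * W x)")
  case False
  then show ?thesis by (rule not_integrable_integral_eq)
next
  case True
  have int_W: "integrable M W"
    using mi by (rule mean_independent_integrable)
  then have [measurable]: "W \<in> borel_measurable M" by simp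
  define c where "c n = (\<integral>x. clip n (h (Z x)) \<partial>M)" for n
  have int_clip: "integrable M (\<lambda>x. clip n (h (Z x)))" for n
    by (rule integrable_const_bound[where B = "real n"]) (auto simp: abs_clip_le)
  have clip_W: "(\<integral>x. clip n (h (Z x)) * W x \<partial>M) = c n * (\<integral>x. W x \<partial>M)" for n
  proof -
    have "(\<integral>x. (clip n (h (Z x)) - c n) * W x \<partial>M) = 0"
    proof (rule mean_independentD[OF mi, where B = "real n + \<bar>c n\<bar>"])
      show "\<bar>clip n (h z) - c n\<bar> \<le> real n + \<bar>c n\<bar>" for z
        using abs_clip_le(1)[of n "h z"] by linarith
      show "(\<integral>x. clip n (h (Z x)) - c n \<partial>M) = 0"
        using int_clip[of n] by (simp add: c_def prob_space)
    qed measurable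
    moreover have "integrable M (\<lambda>x. clip n (h (Z x)) * W x)"
      by (rule integrable_bounded_mult[OF _ _ int_W abs_clip_le(1)]) measurable
    ultimately show ?thesis
      using int_W by (simp add: left_diff_distrib)
  qed
  have "(\<lambda>n. \<integral>x. clip n (h (Z x)) * W x \<partial>M) \<longlonglongrightarrow> (\<integral>x. h (Z x) * W x \<partial>M)"
  proof (rule integral_dominated_convergence[where w = "\<lambda>x. \<bar>h (Z x) * W x\<bar>"])
    show "AE x in M. (\<lambda>n. clip n (h (Z x)) * W x) \<longlonglongrightarrow> h (Z x) * W x"
      by (intro AE_I2 tendsto_mult LIMSEQ_clip tendsto_const)
    show "AE x in M. norm (clip n (h (Z x)) * W x) \<le> \<bar>h (Z x) * W x\<bar>" for n
      by (intro AE_I2) (simp add: abs_mult mult_right_mono abs_clip_le(2))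
  qed (use True in auto)
  moreover have "c \<longlonglongrightarrow> 0"
    unfolding c_def mean_h[symmetric]
  proof (rule integral_dominated_convergence[where w = "\<lambda>x. \<bar>h (Z x)\<bar>"])
    show "AE x in M. (\<lambda>n. clip n (h (Z x))) \<longlonglongrightarrow> h (Z x)"
      by (intro AE_I2 LIMSEQ_clip)
    show "AE x in M. norm (clip n (h (Z x))) \<le> \<bar>h (Z x)\<bar>" for n
      by (intro AE_I2) (simp add: abs_clip_le(2))
  qed (use int_h in auto)
  then have "(\<lambda>n. \<integral>x. clip n (h (Z x)) * W x \<partial>M) \<longlonglongrightarrow> 0"
    unfolding clip_W using tendsto_mult_left_zero by blast
  ultimately show ?thesis
    by (rule LIMSEQ_unique)
qed

lemma (in prob_space) cov_vec_eq_0_if_mean_independent: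
  fixes Z :: "'a \<Rightarrow> real^'p"
  assumes [measurable]: "Z \<in> borel_measurable M" and mi: "mean_independent M Z W"
    and "\<And>j. integrable M (\<lambda>x. Z x $ j)" "\<And>j. (\<integral>x. Z x $ j \<partial>M) = 0"
  shows "cov_vec M W Z = 0"
proof -
  have "(\<integral>x. Z x $ j * W x \<partial>M) = 0" for j
    by (rule integral_mult_eq_0_if_mean_independent[OF _ _ mi, of "\<lambda>z. z $ j"]) (use assms in auto)
  then show ?thesis
    using assms(4) by (simp add: cov_vec_def cov_def vec_eq_iff mult.commute)
qed

lemma integral_eq_if_distr_eq:
  fixes g :: "'c \<Rightarrow> real"
  assumes "V \<in> measurable M N" "V' \<in> measurable M' N" "distr M N V = distr M' N V'"
    and "g \<in> borel_measurable N"
  shows "(\<integral>x. g (V x) \<partial>M) = (\<integral>x. g (V' x) \<partial>M')"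
  using integral_distr[OF assms(1,4)] integral_distr[OF assms(2,4)] assms(3) by simp

lemma integrable_eq_if_distr_eq:
  fixes g :: "'c \<Rightarrow> real"
  assumes "V \<in> measurable M N" "V' \<in> measurable M' N" "distr M N V = distr M' N V'"
    and "g \<in> borel_measurable N"
  shows "integrable M (\<lambda>x. g (V x)) \<longleftrightarrow> integrable M' (\<lambda>x. g (V' x))"
  using integrable_distr_eq[OF assms(1,4)] integrable_distr_eq[OF assms(2,4)] assms(3) by simp

lemma mean_independent_eq_if_distr_eq:
  fixes z :: "'c \<Rightarrow> 'b::topological_space" and g :: "'c \<Rightarrow> real"
  assumes [measurable]: "V \<in> measurable M N" "V' \<in> measurable M' N"
    and law: "distr M N V = distr M' N V'"
    and [measurable]: "z \<in> N \<rightarrow>\<^sub>M borel" "g \<in> borel_measurable N"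
  shows "mean_independent M (\<lambda>x. z (V x)) (\<lambda>x. g (V x)) \<longleftrightarrow>
    mean_independent M' (\<lambda>x. z (V' x)) (\<lambda>x. g (V' x))"
proof -
  have "(\<integral>x. f (z (V x)) \<partial>M) = (\<integral>x. f (z (V' x)) \<partial>M')"
    "(\<integral>x. f (z (V x)) * g (V x) \<partial>M) = (\<integral>x. f (z (V' x)) * g (V' x) \<partial>M')"
    if [measurable]: "f \<in> borel_measurable borel" for f :: "'b \<Rightarrow> real"
    by (rule integral_eq_if_distr_eq[OF assms(1-3)], measurable)+
  moreover have "integrable M (\<lambda>x. g (V x)) \<longleftrightarrow> integrable M' (\<lambda>x. g (V' x))"
    by (rule integrable_eq_if_distr_eq[OF assms(1-3,5)])
  ultimately show ?thesis
    unfolding mean_independent_def by simp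
qed

lemma gammaX_swap: "gammaX a b pY pX = gammaY b a pX pY"
  by (simp add: gammaX_def gammaY_def mult.commute)

lemma gammaY_eq:
  assumes "a * b \<noteq> 1"
  shows "gammaY a b pY pX = a *\<^sub>R gammaX a b pY pX + pY"
proof -
  have "1 - a * b \<noteq> 0" using assms by simp
  then have "(pY $ i + a * pX $ i) / (1 - a * b) = a * ((pX $ i + b * pY $ i) / (1 - a * b)) + pY $ i"
    for i by (simp add: field_simps)
  then show ?thesis
    by (simp add: gammaY_def gammaX_def vec_eq_iff)
qed

lemma gammaX_eq:
  assumes "a * b \<noteq> 1"
  shows "gammaX a b pY pX = b *\<^sub>R gammaY a b pY pX + pX"
proof -
  have "gammaX a b pY pX = b *\<^sub>R gammaX b a pX pY + pX"
    using gammaY_eq[of b a pX pY] assms by (simp add: gammaX_swap mult.commute)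
  then show ?thesis
    by (simp only: gammaX_swap[of b a pX pY])
qed

definition ratio_count :: "real^'p \<Rightarrow> real^'p \<Rightarrow> real \<Rightarrow> nat" where
  "ratio_count gX gY c = card {j. gX $ j \<noteq> 0 \<and> gY $ j / gX $ j = c}"

lemma ratio_count_lt_if_plurality:
  fixes pY pX :: "real^'p"
  assumes plur: "plurality_XY a b pY pX" and ab: "a * b \<noteq> 1" and "c \<noteq> a"
  shows "ratio_count (gammaX a b pY pX) (gammaY a b pY pX) c
    < ratio_count (gammaX a b pY pX) (gammaY a b pY pX) a"
proof -
  define gX where "gX = gammaX a b pY pX"
  define count_invalid where
    "count_invalid d = card {j \<in> invalidXY a b pY pX. pY $ j / gX $ j = d}" for d
  have ratio: "gammaY a b pY pX $ j / gX $ j = a + pY $ j / gX $ j" if "gX $ j \<noteq> 0" for j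
    using gammaY_eq[OF ab, of pY pX] that by (simp add: gX_def field_simps)
  have gX_nonzero: "gX $ j \<noteq> 0 \<longleftrightarrow> pX $ j \<noteq> 0" if "pY $ j = 0" for j
    using that ab by (simp add: gX_def gammaX_def)
  have "{j. gX $ j \<noteq> 0 \<and> gammaY a b pY pX $ j / gX $ j = c}
      \<subseteq> {j \<in> invalidXY a b pY pX. pY $ j / gX $ j = c - a}"
    using ratio \<open>c \<noteq> a\<close> by (auto simp: invalidXY_def gX_def)
  then have "ratio_count gX (gammaY a b pY pX) c \<le> count_invalid (c - a)"
    unfolding ratio_count_def count_invalid_def by (intro card_mono) auto
  also have "\<dots> \<le> Max (range count_invalid)"
  proof (rule Max_ge)
    have "range count_invalid \<subseteq> {..CARD('p)}"
      unfolding count_invalid_def by (auto intro: card_mono)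
    then show "finite (range count_invalid)"
      by (rule finite_subset) simp
  qed simp
  also have "\<dots> < card (validXY pY pX)"
    using plur unfolding plurality_XY_def count_invalid_def gX_def by simp
  also have "validXY pY pX = {j. gX $ j \<noteq> 0 \<and> gammaY a b pY pX $ j / gX $ j = a}"
    using gX_nonzero by (auto simp: validXY_def ratio)
  finally show ?thesis
    unfolding ratio_count_def gX_def .
qed

lemma plurality_identifies_bXY:
  assumes "plurality_XY a b pY pX" "a * b \<noteq> 1"
    and "plurality_XY a' b' pY' pX'" "a' * b' \<noteq> 1"
    and "gammaX a b pY pX = gammaX a' b' pY' pX'" "gammaY a b pY pX = gammaY a' b' pY' pX'"
  shows "a = a'"
  using ratio_count_lt_if_plurality[OF assms(1,2), of a'] ratio_count_lt_if_plurality[OF assms(3,4), of a]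
    assms(5,6) by (metis not_less_iff_gr_or_eq)


definition residual :: "('a \<Rightarrow> real) \<Rightarrow> ('a \<Rightarrow> real) \<Rightarrow> ('a \<Rightarrow> real^'p) \<Rightarrow> real \<Rightarrow> real^'p \<Rightarrow> 'a \<Rightarrow> real"
  where "residual Y X Z b p x = Y x - b * X x - p \<bullet> Z x"

lemma measurable_residual[measurable]:
  assumes [measurable]: "Y \<in> borel_measurable M" "X \<in> borel_measurable M" "Z \<in> borel_measurable M"
  shows "residual Y X Z b p \<in> borel_measurable M"
  unfolding residual_def[abs_def] by measurable

locale linear_sem =
  fixes M :: "'a measure" and X Y :: "'a \<Rightarrow> real" and Z :: "'a \<Rightarrow> real^'p"
    and U :: "'a \<Rightarrow> 'u" and MU :: "'u measure" and xiY xiX :: "'u \<Rightarrow> real"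
    and zeta eta :: "'a \<Rightarrow> real" and bXY bYX :: real and piY piX :: "real^'p"
  assumes model: "lin_sem M X Y Z U MU xiY xiX zeta eta bXY bYX piY piX"

sublocale linear_sem \<subseteq> prob_space M
  using model unfolding lin_sem_def by blast

text \<open>Exchanging the roles of \<open>X\<close> and \<open>Y\<close> gives again a model; every fact proved
  below for the \<open>Y\<close>-equation thus yields its \<open>X\<close>-counterpart under the prefix \<open>swapped\<close>.\<close>
sublocale linear_sem \<subseteq> swapped: linear_sem M Y X Z U MU xiX xiY eta zeta bYX bXY piX piY
  using lin_sem_swap[OF model] by unfold_locales

context linear_sem
begin

lemma measurable_model[measurable]:
  "X \<in> borel_measurable M" "Y \<in> borel_measurable M" "Z \<in> borel_measurable M"
  "U \<in> measurable M MU" "zeta \<in> borel_measurable M" "eta \<in> borel_measurable M"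
  "xiY \<in> borel_measurable MU" "xiX \<in> borel_measurable MU"
  using model unfolding lin_sem_def by blast+

lemma square_integrable_Y: "integrable M (\<lambda>x. (Y x)\<^sup>2)"
  and square_integrable_Z_nth: "integrable M (\<lambda>x. (Z x $ j)\<^sup>2)"
  and integral_Z_nth: "(\<integral>x. Z x $ j \<partial>M) = 0"
  and invertible_second_moment: "invertible (second_moment M Z)"
  and Y_eq: "x \<in> space M \<Longrightarrow> Y x = bXY * X x + piY \<bullet> Z x + xiY (U x) + zeta x"
  and integrable_xiY: "integrable M (\<lambda>x. xiY (U x))"
  and integral_xiY: "(\<integral>x. xiY (U x) \<partial>M) = 0"
  and integrable_zeta: "integrable M zeta"
  and real_cond_exp_zeta: "AE x in M. real_cond_exp M
    (vimage_algebra (space M) (\<lambda>x. (eta x, Z x, U x)) (borel \<Otimes>\<^sub>M (borel \<Otimes>\<^sub>M MU))) zeta x = 0"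
  and indep_set_Z_U: "indep_set {Z -` A \<inter> space M | A. A \<in> sets borel} {U -` A \<inter> space M | A. A \<in> sets MU}"
  and prod_ne_1: "bXY * bYX \<noteq> 1"
  using model prod_ne_1_if_spec_norm_Bmat_lt_1 unfolding lin_sem_def by blast+

lemma indep_var_Z_U:
  fixes phi :: "real^'p \<Rightarrow> real" and psi :: "'u \<Rightarrow> real"
  assumes [measurable]: "phi \<in> borel_measurable borel" "psi \<in> borel_measurable MU"
  shows "indep_var borel (\<lambda>x. phi (Z x)) borel (\<lambda>x. psi (U x))"
proof -
  have stable: "Int_stable {V -` A \<inter> space M | A. A \<in> sets N}" for V :: "'a \<Rightarrow> 'c" and N
  proof (rule Int_stableI)
    fix a b assume "a \<in> {V -` A \<inter> space M | A. A \<in> sets N}" "b \<in> {V -` A \<inter> space M | A. A \<in> sets N}"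
    then obtain A B where "a = V -` A \<inter> space M" "b = V -` B \<inter> space M" "A \<in> sets N" "B \<in> sets N"
      by blast
    then show "a \<inter> b \<in> {V -` A \<inter> space M | A. A \<in> sets N}"
      by (intro CollectI exI[of _ "A \<inter> B"]) auto
  qed
  have comp: "{(\<lambda>x. f (V x)) -` A \<inter> space M | A. A \<in> sets K} \<subseteq> {V -` B \<inter> space M | B. B \<in> sets N}"
    if "f \<in> measurable N K" "V \<in> measurable M N" for f :: "'c \<Rightarrow> 'd" and V K N
  proof safe
    fix A assume "A \<in> sets K"
    then have "f -` A \<inter> space N \<in> sets N" "(\<lambda>x. f (V x)) -` A \<inter> space M = V -` (f -` A \<inter> space N) \<inter> space M"
      using that measurable_space[OF that(2)] by (auto simp: measurable_sets)
    then show "\<exists>B. (\<lambda>x. f (V x)) -` A \<inter> space M = V -` B \<inter> space M \<and> B \<in> sets N"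
      by blast
  qed
  have "indep_set (sigma_sets (space M) {Z -` A \<inter> space M | A. A \<in> sets borel})
      (sigma_sets (space M) {U -` A \<inter> space M | A. A \<in> sets MU})"
    by (rule indep_set_sigma_sets[OF indep_set_Z_U stable stable])
  moreover have
    "sigma_sets (space M) {(\<lambda>x. phi (Z x)) -` A \<inter> space M | A. A \<in> sets borel}
      \<subseteq> sigma_sets (space M) {Z -` A \<inter> space M | A. A \<in> sets borel}"
    "sigma_sets (space M) {(\<lambda>x. psi (U x)) -` A \<inter> space M | A. A \<in> sets borel}
      \<subseteq> sigma_sets (space M) {U -` A \<inter> space M | A. A \<in> sets MU}"
    by (intro sigma_sets_mono' comp; measurable)+
  ultimately have "indep_set
      (sigma_sets (space M) {(\<lambda>x. phi (Z x)) -` A \<inter> space M | A. A \<in> sets borel})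
      (sigma_sets (space M) {(\<lambda>x. psi (U x)) -` A \<inter> space M | A. A \<in> sets borel})"
    unfolding indep_set_def by (elim indep_sets_mono_sets) (auto split: bool.split)
  moreover have "random_variable borel (\<lambda>x. phi (Z x))" "random_variable borel (\<lambda>x. psi (U x))"
    by measurable
  ultimately show ?thesis
    unfolding indep_var_eq by blast
qed

lemma integral_mult_Z_U:
  fixes phi :: "real^'p \<Rightarrow> real" and psi :: "'u \<Rightarrow> real"
  assumes "phi \<in> borel_measurable borel" "psi \<in> borel_measurable MU"
    and "integrable M (\<lambda>x. phi (Z x))" "integrable M (\<lambda>x. psi (U x))"
  shows "(\<integral>x. phi (Z x) * psi (U x) \<partial>M) = (\<integral>x. phi (Z x) \<partial>M) * (\<integral>x. psi (U x) \<partial>M)"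
  using indep_var_lebesgue_integral[OF indep_var_Z_U[OF assms(1,2)] assms(3,4)] .

lemma integral_mult_zeta_eq_0:
  assumes "phi \<in> borel_measurable (borel \<Otimes>\<^sub>M (borel \<Otimes>\<^sub>M MU))"
    and "\<And>x. x \<in> space M \<Longrightarrow> h x = phi (eta x, Z x, U x)"
    and "integrable M (\<lambda>x. h x * zeta x)"
  shows "(\<integral>x. h x * zeta x \<partial>M) = 0"
  by (rule integral_mult_eq_0_if_real_cond_exp_eq_0[OF _ assms(1) _ real_cond_exp_zeta assms(2,3)])
    measurable

end

context linear_sem
begin

abbreviation "resY \<equiv> residual Y X Z bXY piY"
abbreviation "resX \<equiv> residual X Y Z bYX piX"

lemma resY_eq: "x \<in> space M \<Longrightarrow> resY x = xiY (U x) + zeta x"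
  using Y_eq by (simp add: residual_def)

lemma square_integrable_inner_Z: "integrable M (\<lambda>x. (w \<bullet> Z x)\<^sup>2)"
  using square_integrable_sum[of UNIV "\<lambda>i x. w $ i * Z x $ i"] square_integrable_Z_nth
  by (simp add: inner_vec_def power_mult_distrib)

lemma square_integrable_resY: "integrable M (\<lambda>x. (resY x)\<^sup>2)"
  unfolding residual_def using square_integrable_Y swapped.square_integrable_Y
  by (intro square_integrable_diff square_integrable_inner_Z) (auto simp: power_mult_distrib)

lemma square_integrable_xiY: "integrable M (\<lambda>x. (xiY (U x))\<^sup>2)"
proof (rule square_integrable_if_orthogonal_to_clips[OF _ _ integrable_xiY integrable_zeta])
  show "integrable M (\<lambda>x. (xiY (U x) + zeta x)\<^sup>2)"
    using square_integrable_resY by (rule Bochner_Integration.integrable_cong[THEN iffD1, rotated 2])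
      (simp_all add: resY_eq)
  show "(\<integral>x. clip n (xiY (U x)) * zeta x \<partial>M) = 0" for n
  proof (rule integral_mult_zeta_eq_0[where phi = "\<lambda>(_, _, u). clip n (xiY u)"])
    show "integrable M (\<lambda>x. clip n (xiY (U x)) * zeta x)"
      by (rule integrable_bounded_mult[OF _ _ integrable_zeta abs_clip_le(1)]) measurable
  qed auto
qed measurable

lemma square_integrable_zeta: "integrable M (\<lambda>x. (zeta x)\<^sup>2)"
proof -
  have "integrable M (\<lambda>x. (resY x - xiY (U x))\<^sup>2)"
    using square_integrable_resY square_integrable_xiY by (intro square_integrable_diff) auto
  then show ?thesis
    by (rule Bochner_Integration.integrable_cong[THEN iffD1, rotated 2]) (simp_all add: resY_eq)
qed

lemma integral_mult_resY_eq_0: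
  fixes phi :: "real^'p \<Rightarrow> real"
  assumes [measurable]: "phi \<in> borel_measurable borel"
    and square_int: "integrable M (\<lambda>x. (phi (Z x))\<^sup>2)"
  shows "(\<integral>x. phi (Z x) * resY x \<partial>M) = 0"
proof -
  have int_phi: "integrable M (\<lambda>x. phi (Z x))"
    by (rule square_integrable_imp_integrable[OF _ square_int]) measurable
  have int_xi: "integrable M (\<lambda>x. phi (Z x) * xiY (U x))"
    and int_zeta: "integrable M (\<lambda>x. phi (Z x) * zeta x)"
    using square_int square_integrable_xiY square_integrable_zeta
    by (auto intro!: integrable_mult_if_square_integrable)
  have "(\<integral>x. phi (Z x) * xiY (U x) \<partial>M) = 0"
    using integral_mult_Z_U[OF _ _ int_phi integrable_xiY] integral_xiY by simp
  moreover have "(\<integral>x. phi (Z x) * zeta x \<partial>M) = 0"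
    by (rule integral_mult_zeta_eq_0[where phi = "\<lambda>(_, z, _). phi z", OF _ _ int_zeta]) auto
  moreover have "(\<integral>x. phi (Z x) * resY x \<partial>M)
      = (\<integral>x. phi (Z x) * xiY (U x) \<partial>M) + (\<integral>x. phi (Z x) * zeta x \<partial>M)"
    using int_xi int_zeta by (simp add: resY_eq distrib_left cong: Bochner_Integration.integral_cong)
  ultimately show ?thesis
    by simp
qed

lemma mean_independent_mult_zeta:
  assumes [measurable]: "phi \<in> borel_measurable (borel \<Otimes>\<^sub>M (borel \<Otimes>\<^sub>M MU))" "g \<in> borel_measurable M"
    and g: "\<And>x. x \<in> space M \<Longrightarrow> g x = phi (eta x, Z x, U x)"
    and square_int: "integrable M (\<lambda>x. (g x)\<^sup>2)"
  shows "mean_independent M Z (\<lambda>x. g x * zeta x)"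
proof (rule mean_independentI)
  show int: "integrable M (\<lambda>x. g x * zeta x)"
    using square_int square_integrable_zeta by (intro integrable_mult_if_square_integrable) auto
  fix f :: "real^'p \<Rightarrow> real" and B
  assume [measurable]: "f \<in> borel_measurable borel" and bound: "\<And>z. \<bar>f z\<bar> \<le> B"
  have "(\<integral>x. (f (Z x) * g x) * zeta x \<partial>M) = 0"
  proof (rule integral_mult_zeta_eq_0[where phi = "\<lambda>(e, z, u). f z * phi (e, z, u)"])
    show "integrable M (\<lambda>x. f (Z x) * g x * zeta x)"
      unfolding mult.assoc by (rule integrable_bounded_mult[OF _ _ int bound]) measurable
  qed (auto simp: g)
  then show "(\<integral>x. f (Z x) * (g x * zeta x) \<partial>M) = 0"
    by (simp add: mult.assoc)
qed

lemma integral_Z_nth_mult_inner: "(\<integral>x. Z x $ j * (w \<bullet> Z x) \<partial>M) = (second_moment M Z *v w) $ j"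
proof -
  have "integrable M (\<lambda>x. w $ k * (Z x $ j * Z x $ k))" for k
    using square_integrable_Z_nth by (intro integrable_mult_right integrable_mult_if_square_integrable) auto
  then have "(\<integral>x. (\<Sum>k\<in>UNIV. w $ k * (Z x $ j * Z x $ k)) \<partial>M)
      = (\<Sum>k\<in>UNIV. w $ k * (\<integral>x. Z x $ j * Z x $ k \<partial>M))"
    by simp
  then show ?thesis
    by (simp add: inner_vec_def sum_distrib_left matrix_vector_mult_def second_moment_def ac_simps)
qed

lemma integral_Z_nth_mult_Y:
  "(\<integral>x. Z x $ j * Y x \<partial>M) = bXY * (\<integral>x. Z x $ j * X x \<partial>M) + (second_moment M Z *v piY) $ j"
proof -
  have int: "integrable M (\<lambda>x. Z x $ j * V x)" if "integrable M (\<lambda>x. (V x)\<^sup>2)" "V \<in> borel_measurable M" for V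
    using that square_integrable_Z_nth by (intro integrable_mult_if_square_integrable) auto
  have "0 = (\<integral>x. Z x $ j * resY x \<partial>M)"
    using integral_mult_resY_eq_0[of "\<lambda>z. z $ j"] square_integrable_Z_nth by simp
  also have "\<dots> = (\<integral>x. Z x $ j * Y x \<partial>M) - bXY * (\<integral>x. Z x $ j * X x \<partial>M) - (\<integral>x. Z x $ j * (piY \<bullet> Z x) \<partial>M)"
    using int[OF square_integrable_Y] int[OF swapped.square_integrable_Y] int[OF square_integrable_inner_Z]
    by (simp add: residual_def right_diff_distrib mult.left_commute)
  finally show ?thesis
    by (simp add: integral_Z_nth_mult_inner)
qed

end

context linear_sem
begin

lemma second_moment_mult_gammaY:
  "second_moment M Z *v gammaY bXY bYX piY piX = (\<chi> j. \<integral>x. Z x $ j * Y x \<partial>M)"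
proof -
  have solve: "(qY + bXY * qX) / (1 - bXY * bYX) = sY"
    if "sY = bXY * sX + qY" "sX = bYX * sY + qX" for sX sY qX qY :: real
  proof -
    have "qY + bXY * qX = (1 - bXY * bYX) * sY"
      using that by (simp add: algebra_simps)
    then show ?thesis
      using prod_ne_1 by simp
  qed
  show ?thesis
    using solve[OF integral_Z_nth_mult_Y swapped.integral_Z_nth_mult_Y]
    by (simp add: vec_eq_iff gammaY_def matrix_vector_mult_scaleR matrix_vector_right_distrib)
qed

lemma mean_independent_resX_resY: "mean_independent M Z (\<lambda>x. resX x * resY x)"
proof (rule mean_independent_cong)
  have "mean_independent M Z (\<lambda>x. xiX (U x) * xiY (U x))"
  proof (rule mean_independentI)
    show "integrable M (\<lambda>x. xiX (U x) * xiY (U x))"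
      using swapped.square_integrable_xiY square_integrable_xiY
      by (intro integrable_mult_if_square_integrable) auto
    fix f :: "real^'p \<Rightarrow> real" and B
    assume [measurable]: "f \<in> borel_measurable borel" and "\<And>z. \<bar>f z\<bar> \<le> B"
      and "(\<integral>x. f (Z x) \<partial>M) = 0"
    moreover have "integrable M (\<lambda>x. f (Z x))"
      using \<open>\<And>z. \<bar>f z\<bar> \<le> B\<close> by (intro integrable_const_bound[where B = B]) auto
    ultimately show "(\<integral>x. f (Z x) * (xiX (U x) * xiY (U x)) \<partial>M) = 0"
      using integral_mult_Z_U[of f "\<lambda>u. xiX u * xiY u"] \<open>integrable M (\<lambda>x. xiX (U x) * xiY (U x))\<close>
      by simp
  qed
  moreover have "mean_independent M Z (\<lambda>x. xiX (U x) * zeta x)"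
    using swapped.square_integrable_xiY by (intro mean_independent_mult_zeta[where phi = "\<lambda>(_, _, u). xiX u"]) auto
  moreover have "mean_independent M Z (\<lambda>x. xiY (U x) * eta x)"
    using square_integrable_xiY by (intro swapped.mean_independent_mult_zeta[where phi = "\<lambda>(_, _, u). xiY u"]) auto
  moreover have "mean_independent M Z (\<lambda>x. eta x * zeta x)"
    using swapped.square_integrable_zeta by (intro mean_independent_mult_zeta[where phi = "\<lambda>(e, _, _). e"]) auto
  ultimately show "mean_independent M Z (\<lambda>x. xiX (U x) * xiY (U x) + xiX (U x) * zeta x
      + (xiY (U x) * eta x + eta x * zeta x))"
    by (intro mean_independent_add measurable_model)
  show "resX x * resY x = xiX (U x) * xiY (U x) + xiX (U x) * zeta x + (xiY (U x) * eta x + eta x * zeta x)"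
    if "x \<in> space M" for x
    using resY_eq[OF that] swapped.resY_eq[OF that] by (simp add: algebra_simps)
qed

lemma mean_independent_inner_Z_mult_resY: "mean_independent M Z (\<lambda>x. (w \<bullet> Z x) * resY x)"
proof (rule mean_independentI)
  show "integrable M (\<lambda>x. (w \<bullet> Z x) * resY x)"
    using square_integrable_inner_Z square_integrable_resY
    by (intro integrable_mult_if_square_integrable) auto
  fix f :: "real^'p \<Rightarrow> real" and B
  assume [measurable]: "f \<in> borel_measurable borel" and bound: "\<And>z. \<bar>f z\<bar> \<le> B"
  have "\<bar>(f z)\<^sup>2\<bar> \<le> B\<^sup>2" for z
    using bound[of z] by (simp add: abs_le_square_iff[symmetric])
  then have "integrable M (\<lambda>x. (f (Z x) * (w \<bullet> Z x))\<^sup>2)"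
    unfolding power_mult_distrib by (intro integrable_bounded_mult square_integrable_inner_Z) auto
  then have "(\<integral>x. (f (Z x) * (w \<bullet> Z x)) * resY x \<partial>M) = 0"
    by (intro integral_mult_resY_eq_0[of "\<lambda>z. f z * (w \<bullet> z)"]) auto
  then show "(\<integral>x. f (Z x) * ((w \<bullet> Z x) * resY x) \<partial>M) = 0"
    by (simp add: mult.assoc)
qed

text \<open>A second pair \<open>(b, p)\<close> consistent with \<open>\<gamma>\<^sub>X\<close> changes the residual of the
  \<open>X\<close>-equation by \<open>(b - \<beta>\<^sub>Y\<^sub>\<rightarrow>\<^sub>X) (Y - \<gamma>\<^sub>Y\<^sup>T Z)\<close>; if it were still
  mean independent of \<open>Z\<close> after multiplication by \<open>R\<^sub>Y\<close>, so would be \<open>Y R\<^sub>Y\<close>.\<close>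
lemma eq_bYX_if_mean_independent_residual:
  assumes cov: "cov_vec M (\<lambda>x. Y x * RY U xiY zeta x) Z \<noteq> 0"
    and gammaX: "gammaX bXY bYX piY piX = b *\<^sub>R gammaY bXY bYX piY piX + p"
    and mi: "mean_independent M Z (\<lambda>x. residual X Y Z b p x * resY x)"
  shows "b = bYX"
proof (rule ccontr)
  assume "b \<noteq> bYX"
  define g where "g = gammaY bXY bYX piY piX"
  have "p + b *\<^sub>R g = piX + bYX *\<^sub>R g"
    using gammaX gammaX_eq[OF prod_ne_1, of piY piX] by (simp add: g_def add.commute)
  then have "p $ i = (piX - (b - bYX) *\<^sub>R g) $ i" for i
    by (simp add: vec_eq_iff algebra_simps)
  then have p: "p = piX - (b - bYX) *\<^sub>R g"
    by (simp add: vec_eq_iff)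
  have "mean_independent M Z (\<lambda>x. Y x * resY x)"
  proof (rule mean_independent_cong)
    show "mean_independent M Z
        (\<lambda>x. (1 / (b - bYX)) * (resX x * resY x - residual X Y Z b p x * resY x) + (g \<bullet> Z x) * resY x)"
      by (intro mean_independent_add mean_independent_cmult mean_independent_diff mi
          mean_independent_resX_resY mean_independent_inner_Z_mult_resY measurable_model)
    have "resX x - residual X Y Z b p x = (b - bYX) * (Y x - g \<bullet> Z x)" for x
      by (simp add: residual_def p inner_diff_left algebra_simps)
    then have "(1 / (b - bYX)) * (resX x * resY x - residual X Y Z b p x * resY x)
        = (Y x - g \<bullet> Z x) * resY x" for x
      using \<open>b \<noteq> bYX\<close> by (simp add: left_diff_distrib[symmetric])
    then show "Y x * resY x
        = (1 / (b - bYX)) * (resX x * resY x - residual X Y Z b p x * resY x) + (g \<bullet> Z x) * resY x" for x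
      by (simp add: algebra_simps)
  qed
  then have "mean_independent M Z (\<lambda>x. Y x * RY U xiY zeta x)"
    by (rule mean_independent_cong) (simp add: RY_def resY_eq)
  moreover have "integrable M (\<lambda>x. Z x $ j)" for j
    by (rule square_integrable_imp_integrable[OF _ square_integrable_Z_nth]) measurable
  ultimately have "cov_vec M (\<lambda>x. Y x * RY U xiY zeta x) Z = 0"
    by (rule cov_vec_eq_0_if_mean_independent[OF measurable_model(3) _ _ integral_Z_nth])
  with cov show False ..
qed

end

lemma (in linear_sem) second_moment_mult_gammaX:
  "second_moment M Z *v gammaX bXY bYX piY piX = (\<chi> j. \<integral>x. Z x $ j * X x \<partial>M)"
  using swapped.second_moment_mult_gammaY by (simp add: gammaX_swap)


lemma distr_pair_measure_eq_if_same_law: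
  fixes X Y :: "'a \<Rightarrow> real" and Z :: "'a \<Rightarrow> real^'p"
    and X' Y' :: "'b \<Rightarrow> real" and Z' :: "'b \<Rightarrow> real^'p"
  assumes "distr M borel (\<lambda>x. (X x, Y x, Z x)) = distr M' borel (\<lambda>x. (X' x, Y' x, Z' x))"
  shows "distr M (borel \<Otimes>\<^sub>M (borel \<Otimes>\<^sub>M borel)) (\<lambda>x. (X x, Y x, Z x))
    = distr M' (borel \<Otimes>\<^sub>M (borel \<Otimes>\<^sub>M borel)) (\<lambda>x. (X' x, Y' x, Z' x))"
  using assms by (simp add: borel_prod)

lemma gamma_eq_if_same_law:
  fixes Z :: "'a \<Rightarrow> real^'p" and Z' :: "'b \<Rightarrow> real^'p"
  assumes model: "lin_sem M X Y Z U MU xiY xiX zeta eta bXY bYX piY piX"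
    and model': "lin_sem M' X' Y' Z' U' MU' xiY' xiX' zeta' eta' bXY' bYX' piY' piX'"
    and same_law: "distr M borel (\<lambda>x. (X x, Y x, Z x)) = distr M' borel (\<lambda>x. (X' x, Y' x, Z' x))"
  shows "gammaX bXY bYX piY piX = gammaX bXY' bYX' piY' piX'"
    and "gammaY bXY bYX piY piX = gammaY bXY' bYX' piY' piX'"
proof -
  interpret m: linear_sem M X Y Z U MU xiY xiX zeta eta bXY bYX piY piX
    by (rule linear_sem.intro[OF model])
  interpret m': linear_sem M' X' Y' Z' U' MU' xiY' xiX' zeta' eta' bXY' bYX' piY' piX'
    by (rule linear_sem.intro[OF model'])
  have law: "(\<integral>x. g (X x, Y x, Z x) \<partial>M) = (\<integral>x. g (X' x, Y' x, Z' x) \<partial>M')"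
    if "g \<in> borel_measurable (borel \<Otimes>\<^sub>M (borel \<Otimes>\<^sub>M borel))" for g :: "_ \<Rightarrow> real"
    using distr_pair_measure_eq_if_same_law[OF same_law]
    by (rule integral_eq_if_distr_eq[OF _ _ _ that, rotated 2]) measurable
  have "(\<integral>x. Z x $ j * Z x $ k \<partial>M) = (\<integral>x. Z' x $ j * Z' x $ k \<partial>M')" for j k
    by (rule law[of "\<lambda>(_, _, z). z $ j * z $ k", simplified]) measurable
  then have Sigma: "second_moment M Z = second_moment M' Z'"
    by (simp add: second_moment_def)
  have moment_X: "(\<chi> j. \<integral>x. Z x $ j * X x \<partial>M) = (\<chi> j. \<integral>x. Z' x $ j * X' x \<partial>M')"
    by (simp add: vec_eq_iff law[of "\<lambda>(x, _, z). z $ _ * x", simplified])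
  have moment_Y: "(\<chi> j. \<integral>x. Z x $ j * Y x \<partial>M) = (\<chi> j. \<integral>x. Z' x $ j * Y' x \<partial>M')"
    by (simp add: vec_eq_iff law[of "\<lambda>(_, y, z). z $ _ * y", simplified])
  have inj: "inj ((*v) (second_moment M Z))"
    using m.invertible_second_moment by (metis invertible_def matrix_left_invertible_injective)
  show "gammaX bXY bYX piY piX = gammaX bXY' bYX' piY' piX'"
    by (rule injD[OF inj]) (simp add: m.second_moment_mult_gammaX m'.second_moment_mult_gammaX[folded Sigma] moment_X)
  show "gammaY bXY bYX piY piX = gammaY bXY' bYX' piY' piX'"
    by (rule injD[OF inj]) (simp add: m.second_moment_mult_gammaY m'.second_moment_mult_gammaY[folded Sigma] moment_Y)
qed

lemma mean_independent_residuals_if_same_law: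
  fixes Z :: "'a \<Rightarrow> real^'p" and Z' :: "'b \<Rightarrow> real^'p"
  assumes model: "lin_sem M X Y Z U MU xiY xiX zeta eta bXY bYX piY piX"
    and model': "lin_sem M' X' Y' Z' U' MU' xiY' xiX' zeta' eta' bXY' bYX' piY' piX'"
    and same_law: "distr M borel (\<lambda>x. (X x, Y x, Z x)) = distr M' borel (\<lambda>x. (X' x, Y' x, Z' x))"
  shows "mean_independent M Z (\<lambda>x. residual X Y Z bYX' piX' x * residual Y X Z bXY' piY' x)"
proof -
  interpret m: linear_sem M X Y Z U MU xiY xiX zeta eta bXY bYX piY piX
    by (rule linear_sem.intro[OF model])
  interpret m': linear_sem M' X' Y' Z' U' MU' xiY' xiX' zeta' eta' bXY' bYX' piY' piX'
    by (rule linear_sem.intro[OF model'])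
  have "(\<lambda>(_, _, z). z) \<in> borel \<Otimes>\<^sub>M (borel \<Otimes>\<^sub>M borel) \<rightarrow>\<^sub>M (borel :: (real^'p) measure)"
    "(\<lambda>(x, y, z). (x - bYX' * y - piX' \<bullet> z) * (y - bXY' * x - piY' \<bullet> z))
      \<in> borel_measurable (borel \<Otimes>\<^sub>M (borel \<Otimes>\<^sub>M borel))"
    by measurable
  from mean_independent_eq_if_distr_eq[OF _ _ distr_pair_measure_eq_if_same_law[OF same_law] this]
  show ?thesis
    using m'.mean_independent_resX_resY by (simp add: residual_def)
qed

theorem lemma1:
  fixes M :: "'a measure" and X Y :: "'a \<Rightarrow> real" and Z :: "'a \<Rightarrow> real^'p"
    and U :: "'a \<Rightarrow> 'u" and MU :: "'u measure" and xiY xiX :: "'u \<Rightarrow> real"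
    and zeta eta :: "'a \<Rightarrow> real" and bXY bYX :: real and piY piX :: "real^'p"
    and M' :: "'b measure" and X' Y' :: "'b \<Rightarrow> real" and Z' :: "'b \<Rightarrow> real^'p"
    and U' :: "'b \<Rightarrow> 'v" and MU' :: "'v measure" and xiY' xiX' :: "'v \<Rightarrow> real"
    and zeta' eta' :: "'b \<Rightarrow> real" and bXY' bYX' :: real and piY' piX' :: "real^'p"
  assumes model: "lin_sem M X Y Z U MU xiY xiX zeta eta bXY bYX piY piX"
    and plur: "plurality_XY bXY bYX piY piX"
    and cov: "cov_vec M (\<lambda>x. Y x * RY U xiY zeta x) Z \<noteq> 0"
    and model': "lin_sem M' X' Y' Z' U' MU' xiY' xiX' zeta' eta' bXY' bYX' piY' piX'"
    and plur': "plurality_XY bXY' bYX' piY' piX'"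
    and cov': "cov_vec M' (\<lambda>x. Y' x * RY U' xiY' zeta' x) Z' \<noteq> 0"
    and same_law: "distr M borel (\<lambda>x. (X x, Y x, Z x)) = distr M' borel (\<lambda>x. (X' x, Y' x, Z' x))"
  shows "bXY = bXY' \<and> bYX = bYX'"
proof -
  interpret m: linear_sem M X Y Z U MU xiY xiX zeta eta bXY bYX piY piX
    by (rule linear_sem.intro[OF model])
  interpret m': linear_sem M' X' Y' Z' U' MU' xiY' xiX' zeta' eta' bXY' bYX' piY' piX'
    by (rule linear_sem.intro[OF model'])
  note gamma = gamma_eq_if_same_law[OF model model' same_law]
  have bXY: "bXY = bXY'"
    by (rule plurality_identifies_bXY[OF plur m.prod_ne_1 plur' m'.prod_ne_1 gamma])
  have piY: "piY = piY'"
    using gammaY_eq[OF m.prod_ne_1, of piY piX] gammaY_eq[OF m'.prod_ne_1, of piY' piX'] gamma bXY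
    by simp
  have "mean_independent M Z (\<lambda>x. residual X Y Z bYX' piX' x * residual Y X Z bXY' piY' x)"
    by (rule mean_independent_residuals_if_same_law[OF model model' same_law])
  then have "mean_independent M Z (\<lambda>x. residual X Y Z bYX' piX' x * m.resY x)"
    by (simp add: bXY piY)
  moreover have "gammaX bXY bYX piY piX = bYX' *\<^sub>R gammaY bXY bYX piY piX + piX'"
    using gammaX_eq[OF m'.prod_ne_1, of piY' piX'] gamma by simp
  ultimately have "bYX' = bYX"
    by (rule m.eq_bYX_if_mean_independent_residual[OF cov, rotated])
  with bXY show ?thesis
    by simp
qed

end
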